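(* For every integer $n \geq 1$, \[ \sum_{\sigma\in\mathcal{Q}_n} x^{\operatorname{ap}(\sigma)}(-1)^{\operatorname{even}(\sigma)} = \sum_{\pi\in \overline{\mathfrak{S}}_n}x^{\operatorname{asc}(\pi)}(-1)^{\operatorname{mark}(\pi)} = 1. \]
   Context: Let $[n]_2$ be the multiset $\{1,1,2,2,\dots,n,n\}$. A Stirling permutation of order $n$ is a permutation $\sigma=\sigma_1\cdots\sigma_{2n}$ of $[n]_2$ such that for each $i\in[n]$ every entry between the two occurrences of $i$ is greater than $i$; $\mathcal{Q}_n$ denotes the set of these. An ascent plateau of $\sigma$ is an entry $\sigma_i$ with $2\le i\le 2n-1$ and $\sigma_{i-1}<\sigma_i=\sigma_{i+1}$; $\operatorname{ap}(\sigma)$ is their number. An entry $k$ of $\sigma$ is even indexed if the first occurrence of $k$ is at an even position; $\operatorname{even}(\sigma)$ is the number of even indexed values. A left-to-right minimum of a permutation $\pi=\pi_1\cdots\pi_n$ is an entry $\pi_i$ with $i=1$ or $\pi_i<\pi_j$ for all $j<i$. A marked permutation of $[n]$ is a permutation of $[n]$ together with marks on some (possibly none) of its entries that are not left-to-right minima; $\overline{\mathfrak{S}}_n$ is the set of marked permutations of $[n]$. For $\pi\in\overline{\mathfrak{S}}_n$, $\operatorname{mark}(\pi)$ is the number of marked entries and $\operatorname{asc}(\pi)$ is the number of $i\in\{2,\dots,n\}$ with $\pi_i>\pi_{i-1}$ (marks ignored). *)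

theory Defs
  imports "HOL-Library.Multiset"
begin

text \<open>Lists are 0-indexed; the paper's position p (1-indexed) is list index p-1.\<close>

definition stirling_perms :: "nat \<Rightarrow> nat list set" where
  "stirling_perms n = {\<sigma>. mset \<sigma> = mset ([1..<n+1] @ [1..<n+1]) \<and>
     (\<forall>i\<in>{1..n}. \<forall>a b c. a < b \<and> b < c \<and> c < length \<sigma> \<and> \<sigma>!a = i \<and> \<sigma>!c = i \<longrightarrow> \<sigma>!b > i)}"

text \<open>ascent plateaux: paper positions 2..2n-1, i.e. list indices 1..2n-2\<close>
definition ap :: "nat list \<Rightarrow> nat" where
  "ap \<sigma> = card {j. 1 \<le> j \<and> j + 1 < length \<sigma> \<and> \<sigma>!(j-1) < \<sigma>!j \<and> \<sigma>!j = \<sigma>!(j+1)}"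

definition first_pos :: "nat list \<Rightarrow> nat \<Rightarrow> nat" where
  "first_pos \<sigma> k = (LEAST j. j < length \<sigma> \<and> \<sigma>!j = k)"

text \<open>even indexed: first occurrence at an even (1-indexed) position, i.e. odd 0-indexed index\<close>
definition even_idx :: "nat list \<Rightarrow> nat" where
  "even_idx \<sigma> = card {k \<in> set \<sigma>. odd (first_pos \<sigma> k)}"

definition lrmin :: "nat list \<Rightarrow> nat \<Rightarrow> bool" where
  "lrmin \<pi> i \<longleftrightarrow> i < length \<pi> \<and> (\<forall>j<i. \<pi>!i < \<pi>!j)"

definition marked_perms :: "nat \<Rightarrow> (nat list \<times> nat set) set" where
  "marked_perms n = {(\<pi>, M). distinct \<pi> \<and> set \<pi> = {1..n} \<and>
      M \<subseteq> {i. i < length \<pi> \<and> \<not> lrmin \<pi> i}}"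

definition asc :: "nat list \<Rightarrow> nat" where
  "asc \<pi> = card {i. 1 \<le> i \<and> i < length \<pi> \<and> \<pi>!(i-1) < \<pi>!i}"

end

theory Submission
  imports Defs
begin

text \<open>
  For a fixed permutation \<open>\<pi>\<close>, the marks range over all subsets of the entries that are
  not left-to-right minima, and \<open>\<Sum>M\<subseteq>S. (-1)^|M|\<close> vanishes unless \<open>S = {}\<close>. So only
  the permutation \<open>n(n-1)\<cdots>1\<close>, which has no ascents, survives in the marked sum.

  Every Stirling permutation of order \<open>n + 1\<close> arises in exactly one way by inserting the
  adjacent pair \<open>(n+1)(n+1)\<close> into one of the slots \<open>0, \<dots>, 2n\<close> of a Stirling permutation
  \<open>\<tau>\<close> of order \<open>n\<close>. Inserting into slot \<open>i\<close> changes the sign by \<open>(-1)^i\<close>, and it raises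
  the number of ascent plateaux by one except when \<open>i = 0\<close>, when \<open>i\<close> is an ascent plateau
  of \<open>\<tau>\<close>, or when \<open>i - 1\<close> is one. These exceptional slots have alternating sum \<open>1\<close>, as do
  all slots, so the insertions into \<open>\<tau>\<close> together carry exactly the weight of \<open>\<tau>\<close>, and
  the Stirling sum equals \<open>1\<close> by induction.
\<close>

section \<open>Alternating sums\<close>

lemma sum_Pow_neg_one_power_card:
  assumes "finite S"
  shows "(\<Sum>T\<in>Pow S. (-1::'a::comm_ring_1) ^ card T) = (if S = {} then 1 else 0)"
proof -
  have "(\<Prod>x\<in>S. 1 - 1) = (\<Sum>T\<in>Pow S. (-1::'a) ^ card T)"
    using prod_diff_conv_sum[OF assms, of "\<lambda>_. 1" "\<lambda>_. 1"] by simp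
  moreover have "(\<Prod>x\<in>S. 1 - 1 :: 'a) = (if S = {} then 1 else 0)"
    using assms by (simp add: power_0_left)
  ultimately show ?thesis
    by simp
qed

lemma sum_atMost_neg_one_power_even:
  assumes "even m"
  shows "(\<Sum>i\<le>m. (-1::'a::comm_ring_1) ^ i) = 1"
proof -
  obtain k where "m = 2 * k"
    using assms by blast
  moreover have "(\<Sum>i\<le>2 * k. (-1::'a) ^ i) = 1"
    by (induction k) simp_all
  ultimately show ?thesis
    by simp
qed

lemma sum_neg_one_power_insert_0_Suc_image:
  assumes "finite J" "0 \<notin> J" "J \<inter> Suc ` J = {}"
  shows "(\<Sum>i\<in>insert 0 (J \<union> Suc ` J). (-1::'a::comm_ring_1) ^ i) = 1"
proof -
  have "(\<Sum>i\<in>J \<union> Suc ` J. (-1::'a) ^ i) = (\<Sum>i\<in>J. (-1) ^ i) + (\<Sum>i\<in>Suc ` J. (-1) ^ i)"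
    using assms by (simp add: sum.union_disjoint)
  also have "(\<Sum>i\<in>Suc ` J. (-1::'a) ^ i) = - (\<Sum>i\<in>J. (-1) ^ i)"
    by (simp add: sum.reindex sum_negf)
  finally show ?thesis
    using assms by simp
qed

lemma sum_atMost_alternating_weights:
  fixes x :: "'a::comm_ring_1"
  assumes "even m" "B \<subseteq> {..m}" "(\<Sum>i\<in>B. (-1::'a) ^ i) = 1"
  shows "(\<Sum>i\<le>m. (if i \<in> B then 1 else x) * (-1) ^ i) = 1"
proof -
  have "(\<Sum>i\<le>m. (if i \<in> B then 1 else x) * (-1) ^ i)
      = (\<Sum>i\<le>m. x * (-1) ^ i + (1 - x) * (if i \<in> B then (-1) ^ i else 0))"
    by (rule sum.cong) (simp_all add: algebra_simps)
  also have "\<dots> = x * (\<Sum>i\<le>m. (-1) ^ i) + (1 - x) * (\<Sum>i\<le>m. if i \<in> B then (-1) ^ i else 0)"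
    by (simp add: sum.distrib sum_distrib_left)
  also have "(\<Sum>i\<le>m. if i \<in> B then (-1::'a) ^ i else 0) = (\<Sum>i\<in>B. (-1) ^ i)"
    using assms(2) by (simp add: sum.inter_restrict[symmetric] Int_absorb1)
  finally show ?thesis
    using assms by (simp add: sum_atMost_neg_one_power_even)
qed

section \<open>Marked permutations\<close>

lemma all_lrmin_iff_sorted_wrt_greater:
  "(\<forall>i<length \<pi>. lrmin \<pi> i) \<longleftrightarrow> sorted_wrt (>) \<pi>"
  by (auto simp: lrmin_def sorted_wrt_iff_nth_less)

lemma asc_eq_0_if_sorted_wrt_greater:
  assumes "sorted_wrt (>) \<pi>"
  shows "asc \<pi> = 0"
proof -
  have "\<not> \<pi> ! (i - 1) < \<pi> ! i" if "1 \<le> i" "i < length \<pi>" for i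
    using assms that unfolding sorted_wrt_iff_nth_less
    by (metis diff_less less_imp_le_nat less_le_trans not_less_iff_gr_or_eq zero_less_one)
  then show ?thesis
    by (auto simp: asc_def)
qed

lemma sorted_wrt_greater_iff_rev_upt:
  assumes "set \<pi> = {1..n}"
  shows "sorted_wrt (>) \<pi> \<longleftrightarrow> \<pi> = rev [1..<Suc n]"
proof
  assume "sorted_wrt (>) \<pi>"
  then have "sorted_wrt (<) (rev \<pi>)"
    by (simp add: sorted_wrt_rev)
  moreover have "set [1..<Suc n] = set (rev \<pi>)"
    using assms by (simp add: atLeastLessThanSuc_atLeastAtMost del: upt_Suc)
  ultimately have "rev \<pi> = [1..<Suc n]"
    by (intro strict_sorted_equal) (simp_all del: upt_Suc)
  then show "\<pi> = rev [1..<Suc n]"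
    by (metis rev_rev_ident)
qed (simp add: sorted_wrt_rev del: upt_Suc)

lemma marked_perms_eq_Sigma:
  "marked_perms n = (SIGMA \<pi>:{\<pi>. distinct \<pi> \<and> set \<pi> = {1..n}}. Pow {i. i < length \<pi> \<and> \<not> lrmin \<pi> i})"
  unfolding marked_perms_def by blast

lemma sum_marked_perms:
  "(\<Sum>(\<pi>, M)\<in>marked_perms n. x ^ asc \<pi> * (-1) ^ card M) = (1::'a::comm_ring_1)"
proof -
  define P where "P = {\<pi>. distinct \<pi> \<and> set \<pi> = {1..n}}"
  define S where "S \<pi> = {i. i < length \<pi> \<and> \<not> lrmin \<pi> i}" for \<pi>
  have "finite P"
    unfolding P_def by (rule finite_subset[OF _ finite_subset_distinct[of "{1..n}"]]) auto
  have unmarked: "S \<pi> = {} \<longleftrightarrow> \<pi> = rev [1..<Suc n]" if "\<pi> \<in> P" for \<pi>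
    using that all_lrmin_iff_sorted_wrt_greater[of \<pi>] sorted_wrt_greater_iff_rev_upt[of \<pi> n]
    by (auto simp: P_def S_def)
  have inner: "(\<Sum>M\<in>Pow (S \<pi>). x ^ asc \<pi> * (-1) ^ card M) = (if \<pi> = rev [1..<Suc n] then 1 else (0::'a))"
    if "\<pi> \<in> P" for \<pi>
    using unmarked[OF that] asc_eq_0_if_sorted_wrt_greater[of "rev [1..<Suc n]"]
    by (simp add: S_def sum_Pow_neg_one_power_card sorted_wrt_rev flip: sum_distrib_left del: upt_Suc)
  have "(\<Sum>(\<pi>, M)\<in>marked_perms n. x ^ asc \<pi> * (-1) ^ card M) = (\<Sum>\<pi>\<in>P. \<Sum>M\<in>Pow (S \<pi>). x ^ asc \<pi> * (-1) ^ card M)"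
    unfolding marked_perms_eq_Sigma P_def[symmetric] S_def[symmetric]
    by (rule sum.Sigma[symmetric]) (auto simp: \<open>finite P\<close> S_def)
  also have "\<dots> = (\<Sum>\<pi>\<in>P. if \<pi> = rev [1..<Suc n] then 1 else 0)"
    by (rule sum.cong) (simp_all add: inner)
  also have "\<dots> = 1"
    using \<open>finite P\<close> by (simp add: P_def atLeastLessThanSuc_atLeastAtMost del: upt_Suc)
  finally show ?thesis .
qed

section \<open>Stirling permutations by insertion of the largest pair\<close>

definition stirling_cond :: "nat list \<Rightarrow> bool" where
  "stirling_cond \<sigma> \<longleftrightarrow>
     (\<forall>a b c. a < b \<longrightarrow> b < c \<longrightarrow> c < length \<sigma> \<longrightarrow> \<sigma> ! a = \<sigma> ! c \<longrightarrow> \<sigma> ! a < \<sigma> ! b)"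

definition double_range :: "nat \<Rightarrow> nat multiset" where
  "double_range n = mset ([1..<n+1] @ [1..<n+1])"

lemma double_range_Suc: "double_range (Suc n) = double_range n + {#Suc n, Suc n#}"
  by (simp add: double_range_def)

lemma set_mset_double_range: "set_mset (double_range n) = {1..n}"
  by (simp add: double_range_def atLeastLessThanSuc_atLeastAtMost del: upt_Suc)

lemma size_double_range: "size (double_range n) = 2 * n"
  by (simp add: double_range_def del: upt_Suc)

lemma stirling_condD:
  "stirling_cond \<sigma> \<Longrightarrow> a < b \<Longrightarrow> b < c \<Longrightarrow> c < length \<sigma> \<Longrightarrow> \<sigma> ! a = \<sigma> ! c \<Longrightarrow> \<sigma> ! a < \<sigma> ! b"
  unfolding stirling_cond_def by blast

lemma stirling_perms_iff:
  "\<sigma> \<in> stirling_perms n \<longleftrightarrow> mset \<sigma> = double_range n \<and> stirling_cond \<sigma>"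
proof (cases "mset \<sigma> = double_range n")
  case True
  then have "set \<sigma> = {1..n}"
    by (metis set_mset_mset set_mset_double_range)
  then have range: "\<sigma> ! a \<in> {1..n}" if "a < c" "c < length \<sigma>" for a c
    using that by (metis less_trans nth_mem)
  have "(\<forall>i\<in>{1..n}. \<forall>a b c. a < b \<and> b < c \<and> c < length \<sigma> \<and> \<sigma> ! a = i \<and> \<sigma> ! c = i \<longrightarrow> i < \<sigma> ! b)
      \<longleftrightarrow> stirling_cond \<sigma>"
  proof
    assume cond: "\<forall>i\<in>{1..n}. \<forall>a b c. a < b \<and> b < c \<and> c < length \<sigma> \<and> \<sigma> ! a = i \<and> \<sigma> ! c = i \<longrightarrow> i < \<sigma> ! b"
    show "stirling_cond \<sigma>"
      unfolding stirling_cond_def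
    proof (intro allI impI)
      fix a b c
      assume abc: "a < b" "b < c" "c < length \<sigma>" "\<sigma> ! a = \<sigma> ! c"
      then have "a < b \<and> b < c \<and> c < length \<sigma> \<and> \<sigma> ! a = \<sigma> ! a \<and> \<sigma> ! c = \<sigma> ! a"
        by simp
      with cond range[OF less_trans[OF abc(1,2)] abc(3)] show "\<sigma> ! a < \<sigma> ! b"
        by blast
    qed
  next
    assume "stirling_cond \<sigma>"
    then show "\<forall>i\<in>{1..n}. \<forall>a b c. a < b \<and> b < c \<and> c < length \<sigma> \<and> \<sigma> ! a = i \<and> \<sigma> ! c = i \<longrightarrow> i < \<sigma> ! b"
      by (auto dest: stirling_condD)
  qed
  with True show ?thesis
    by (simp add: stirling_perms_def double_range_def)
qed (simp add: stirling_perms_def double_range_def)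

lemma set_stirling_perm: "\<sigma> \<in> stirling_perms n \<Longrightarrow> set \<sigma> = {1..n}"
  by (metis set_mset_mset set_mset_double_range stirling_perms_iff)

lemma length_stirling_perm: "\<sigma> \<in> stirling_perms n \<Longrightarrow> length \<sigma> = 2 * n"
  by (metis size_mset size_double_range stirling_perms_iff)

lemma finite_stirling_perms: "finite (stirling_perms n)"
  by (rule finite_subset[OF _ finite_lists_length_eq[of "{1..n}" "2 * n"]])
    (auto simp: set_stirling_perm length_stirling_perm)

lemma stirling_perms_0: "stirling_perms 0 = {[]}"
  by (auto simp: stirling_perms_iff stirling_cond_def double_range_def)

definition insert_pair :: "nat list \<Rightarrow> nat \<Rightarrow> nat \<Rightarrow> nat list" where
  "insert_pair \<tau> i N = take i \<tau> @ N # N # drop i \<tau>"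

definition shift :: "nat \<Rightarrow> nat \<Rightarrow> nat" where
  "shift i k = (if k < i then k else k + 2)"

lemma strict_mono_shift: "strict_mono (shift i)"
  by (auto simp: strict_mono_def shift_def)

lemma length_insert_pair [simp]: "i \<le> length \<tau> \<Longrightarrow> length (insert_pair \<tau> i N) = length \<tau> + 2"
  by (simp add: insert_pair_def)

lemma mset_insert_pair: "mset (insert_pair \<tau> i N) = mset \<tau> + {#N, N#}"
proof -
  have "mset \<tau> = mset (take i \<tau>) + mset (drop i \<tau>)"
    by (metis append_take_drop_id mset_append)
  then show ?thesis
    by (simp add: insert_pair_def)
qed

lemma set_insert_pair: "set (insert_pair \<tau> i N) = insert N (set \<tau>)"
proof -
  have "set_mset (mset (insert_pair \<tau> i N)) = set_mset (mset \<tau> + {#N, N#})"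
    by (simp only: mset_insert_pair)
  then show ?thesis
    by auto
qed

lemma nth_insert_pair:
  assumes "i \<le> length \<tau>"
  shows "insert_pair \<tau> i N ! k = (if k < i then \<tau> ! k else if k \<le> Suc i then N else \<tau> ! (k - 2))"
  using assms by (auto simp: insert_pair_def nth_append nth_Cons')

lemma nth_insert_pair_before: "i \<le> length \<tau> \<Longrightarrow> k < i \<Longrightarrow> insert_pair \<tau> i N ! k = \<tau> ! k"
  and nth_insert_pair_block: "i \<le> length \<tau> \<Longrightarrow> i \<le> k \<Longrightarrow> k \<le> Suc i \<Longrightarrow> insert_pair \<tau> i N ! k = N"
  and nth_insert_pair_after: "i \<le> length \<tau> \<Longrightarrow> Suc i < k \<Longrightarrow> insert_pair \<tau> i N ! k = \<tau> ! (k - 2)"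
  by (simp_all add: nth_insert_pair)

lemmas nth_insert_pair_simps = nth_insert_pair_before nth_insert_pair_block nth_insert_pair_after

lemma nth_insert_pair_shift: "i \<le> length \<tau> \<Longrightarrow> insert_pair \<tau> i N ! shift i k = \<tau> ! k"
  by (simp add: nth_insert_pair shift_def)

lemma insert_pair_index_cases:
  assumes "i \<le> length \<tau>" "k < length \<tau> + 2"
  obtains "k = i" | "k = Suc i" | k' where "k' < length \<tau>" "k = shift i k'"
proof -
  consider "k < i" | "k = i" | "k = Suc i" | "i + 2 \<le> k"
    by linarith
  then show thesis
  proof cases
    case 1
    with assms show thesis by (intro that(3)[of k]) (auto simp: shift_def)
  next
    case 4
    with assms show thesis by (intro that(3)[of "k - 2"]) (auto simp: shift_def)
  qed (use that in auto)
qed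

lemma stirling_cond_insert_pair:
  assumes cond: "stirling_cond \<tau>" and bound: "\<forall>y\<in>set \<tau>. y < N" and i: "i \<le> length \<tau>"
  shows "stirling_cond (insert_pair \<tau> i N)"
  unfolding stirling_cond_def
proof (intro allI impI)
  let ?\<sigma> = "insert_pair \<tau> i N"
  fix a b c
  assume abc: "a < b" "b < c" "c < length ?\<sigma>" "?\<sigma> ! a = ?\<sigma> ! c"
  have block: "?\<sigma> ! i = N" "?\<sigma> ! Suc i = N"
    using i by (simp_all add: nth_insert_pair_block)
  have old: "?\<sigma> ! shift i k = \<tau> ! k" "\<tau> ! k < N" if "k < length \<tau>" for k
    using i bound that by (simp_all add: nth_insert_pair_shift)
  have len: "a < length \<tau> + 2" "b < length \<tau> + 2" "c < length \<tau> + 2"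
    using abc i by simp_all
  have before: "?\<sigma> ! k < N" if "k < i" for k
    using that i bound by (simp add: nth_insert_pair_before)
  show "?\<sigma> ! a < ?\<sigma> ! b"
  proof (cases rule: insert_pair_index_cases[OF i len(3)])
    case (3 c')
    have a_small: "?\<sigma> ! a < N"
      using abc(4) 3 old by simp
    then obtain a' where a': "a' < length \<tau>" "a = shift i a'"
      using block by (cases rule: insert_pair_index_cases[OF i len(1)]) auto
    show ?thesis
    proof (cases rule: insert_pair_index_cases[OF i len(2)])
      case (3 b')
      have "a' < b'" "b' < c'"
        using abc a' 3 \<open>c = shift i c'\<close> strict_mono_shift[of i] by (simp_all add: strict_mono_less)
      moreover have "\<tau> ! a' = \<tau> ! c'"
        using abc(4) a' \<open>c = shift i c'\<close> old(1)[OF a'(1)] old(1)[OF \<open>c' < length \<tau>\<close>] by simp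
      ultimately show ?thesis
        using stirling_condD[OF cond _ _ \<open>c' < length \<tau>\<close>] a' 3 old(1)[OF a'(1)] old(1)[OF 3(1)] by simp
    qed (use block a_small in auto)
  qed (use abc block before[of a] in simp_all)
qed

lemma stirling_cond_reindex:
  assumes cond: "stirling_cond \<sigma>" and mono: "strict_mono f"
    and embed: "\<And>k. k < length \<tau> \<Longrightarrow> f k < length \<sigma> \<and> \<sigma> ! f k = \<tau> ! k"
  shows "stirling_cond \<tau>"
  unfolding stirling_cond_def
proof (intro allI impI)
  fix a b c
  assume abc: "a < b" "b < c" "c < length \<tau>" "\<tau> ! a = \<tau> ! c"
  have "f a < f b" "f b < f c"
    using abc mono by (simp_all add: strict_mono_less)
  moreover have "a < length \<tau>" "b < length \<tau>"
    using abc by simp_all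
  ultimately show "\<tau> ! a < \<tau> ! b"
    using stirling_condD[OF cond, of "f a" "f b" "f c"] abc embed[of a] embed[of b] embed[of c] by simp
qed

lemma stirling_cond_max_adjacent:
  assumes cond: "stirling_cond \<sigma>" and max: "\<forall>y\<in>set \<sigma>. y \<le> N"
    and pq: "p < q" "q < length \<sigma>" "\<sigma> ! p = N" "\<sigma> ! q = N"
  shows "q = Suc p"
proof (rule ccontr)
  assume "q \<noteq> Suc p"
  with pq have "Suc p < q"
    by simp
  then have "N < \<sigma> ! Suc p"
    using stirling_condD[OF cond, of p "Suc p" q] pq by simp
  moreover have "\<sigma> ! Suc p \<le> N"
    using max \<open>Suc p < q\<close> pq(2) by simp
  ultimately show False
    by simp
qed

lemma obtain_two_positions:
  assumes "count (mset \<sigma>) N = 2"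
  obtains p q where "p < q" "q < length \<sigma>" "\<sigma> ! p = N" "\<sigma> ! q = N"
proof -
  have "card {i. i < length \<sigma> \<and> N = \<sigma> ! i} = 2"
    using assms by (simp add: count_mset count_list_eq_length_filter length_filter_conv_card)
  then obtain p q where pq: "{i. i < length \<sigma> \<and> N = \<sigma> ! i} = {p, q}" "p \<noteq> q"
    by (auto simp: card_2_iff)
  have "p \<in> {i. i < length \<sigma> \<and> N = \<sigma> ! i}" "q \<in> {i. i < length \<sigma> \<and> N = \<sigma> ! i}"
    unfolding pq(1) by simp_all
  then have p: "p < length \<sigma>" "\<sigma> ! p = N" and q: "q < length \<sigma>" "\<sigma> ! q = N"
    by simp_all
  show thesis
  proof (cases "p < q")
    case True
    with p q show thesis by (intro that)
  next
    case False
    with \<open>p \<noteq> q\<close> have "q < p" by simp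
    with p q show thesis by (intro that)
  qed
qed

lemma insert_pair_take_drop:
  assumes "Suc p < length \<sigma>" "\<sigma> ! p = N" "\<sigma> ! Suc p = N"
  shows "insert_pair (take p \<sigma> @ drop (Suc (Suc p)) \<sigma>) p N = \<sigma>"
proof -
  have "\<sigma> = take p \<sigma> @ \<sigma> ! p # \<sigma> ! Suc p # drop (Suc (Suc p)) \<sigma>"
    using assms(1) by (simp add: Cons_nth_drop_Suc)
  then show ?thesis
    using assms by (simp add: insert_pair_def)
qed

lemma stirling_perms_Suc_cases:
  assumes "\<sigma> \<in> stirling_perms (Suc n)"
  obtains \<tau> i where "\<tau> \<in> stirling_perms n" "i \<le> length \<tau>" "\<sigma> = insert_pair \<tau> i (Suc n)"
proof -
  have mset: "mset \<sigma> = double_range n + {#Suc n, Suc n#}" and cond: "stirling_cond \<sigma>"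
    using assms by (simp_all add: stirling_perms_iff double_range_Suc)
  have "Suc n \<notin># double_range n"
    by (simp add: set_mset_double_range)
  then have "count (mset \<sigma>) (Suc n) = 2"
    by (simp add: mset not_in_iff)
  then obtain p q where pq: "p < q" "q < length \<sigma>" "\<sigma> ! p = Suc n" "\<sigma> ! q = Suc n"
    by (rule obtain_two_positions)
  have "q = Suc p"
    using stirling_cond_max_adjacent[OF cond _ pq] set_stirling_perm[OF assms] by simp
  define \<tau> where "\<tau> = take p \<sigma> @ drop (Suc (Suc p)) \<sigma>"
  have \<sigma>: "\<sigma> = insert_pair \<tau> p (Suc n)"
    using insert_pair_take_drop[of p \<sigma> "Suc n"] pq \<open>q = Suc p\<close> by (simp add: \<tau>_def)
  have p: "p \<le> length \<tau>"
    using pq \<open>q = Suc p\<close> by (simp add: \<tau>_def)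
  have "mset \<tau> = double_range n"
    using mset mset_insert_pair[of \<tau> p "Suc n"] by (simp flip: \<sigma>)
  moreover have "stirling_cond \<tau>"
  proof (rule stirling_cond_reindex[OF cond strict_mono_shift])
    fix k
    assume "k < length \<tau>"
    then have "shift p k < length \<sigma>"
      using p by (simp add: \<sigma> shift_def)
    moreover have "\<sigma> ! shift p k = \<tau> ! k"
      using p by (simp add: \<sigma> nth_insert_pair_shift)
    ultimately show "shift p k < length \<sigma> \<and> \<sigma> ! shift p k = \<tau> ! k" ..
  qed
  ultimately show thesis
    using that p \<sigma> by (simp add: stirling_perms_iff)
qed

lemma insert_pair_in_stirling_perms:
  assumes "\<tau> \<in> stirling_perms n" "i \<le> length \<tau>"
  shows "insert_pair \<tau> i (Suc n) \<in> stirling_perms (Suc n)"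
proof -
  have "\<forall>y\<in>set \<tau>. y < Suc n"
    using set_stirling_perm[OF assms(1)] by auto
  with assms show ?thesis
    by (simp add: stirling_perms_iff mset_insert_pair double_range_Suc stirling_cond_insert_pair)
qed

lemma length_takeWhile_less:
  assumes "x \<in> set xs" "\<not> P x"
  shows "length (takeWhile P xs) < length xs"
proof -
  have "takeWhile P xs \<noteq> xs"
    using assms by (auto simp: takeWhile_eq_all_conv)
  then show ?thesis
    by (metis length_takeWhile_le order_le_neq_trans takeWhile_eq_take take_all_iff)
qed

lemma first_pos_eq_length_takeWhile:
  assumes "k \<in> set \<sigma>"
  shows "first_pos \<sigma> k = length (takeWhile (\<lambda>y. y \<noteq> k) \<sigma>)"
  unfolding first_pos_def
proof (rule Least_equality)
  let ?t = "length (takeWhile (\<lambda>y. y \<noteq> k) \<sigma>)"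
  have "?t < length \<sigma>"
    using assms by (rule length_takeWhile_less) simp
  then show "?t < length \<sigma> \<and> \<sigma> ! ?t = k"
    using nth_length_takeWhile by fastforce
next
  fix j
  assume j: "j < length \<sigma> \<and> \<sigma> ! j = k"
  show "length (takeWhile (\<lambda>y. y \<noteq> k) \<sigma>) \<le> j"
  proof (rule ccontr)
    assume "\<not> length (takeWhile (\<lambda>y. y \<noteq> k) \<sigma>) \<le> j"
    then have "\<sigma> ! j \<in> set (takeWhile (\<lambda>y. y \<noteq> k) \<sigma>)"
      by (metis not_le nth_mem takeWhile_nth)
    with j show False
      by (blast dest: set_takeWhileD)
  qed
qed

lemma first_pos_insert_pair_new:
  assumes "N \<notin> set \<tau>" "i \<le> length \<tau>"
  shows "first_pos (insert_pair \<tau> i N) N = i"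
proof -
  have "\<forall>y\<in>set (take i \<tau>). y \<noteq> N"
    using assms(1) by (auto dest: in_set_takeD)
  then show ?thesis
    using assms(2) by (simp add: first_pos_eq_length_takeWhile set_insert_pair insert_pair_def)
qed

lemma first_pos_insert_pair_old:
  assumes "i \<le> length \<tau>" "k \<in> set \<tau>" "k \<noteq> N"
  shows "first_pos (insert_pair \<tau> i N) k = shift i (first_pos \<tau> k)"
proof -
  let ?P = "\<lambda>y. y \<noteq> k"
  have \<tau>: "takeWhile ?P \<tau> =
      (if \<forall>y\<in>set (take i \<tau>). ?P y then take i \<tau> @ takeWhile ?P (drop i \<tau>) else takeWhile ?P (take i \<tau>))"
    using takeWhile_append[of ?P "take i \<tau>" "drop i \<tau>"] by simp
  have \<sigma>: "takeWhile ?P (insert_pair \<tau> i N) =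
      (if \<forall>y\<in>set (take i \<tau>). ?P y then take i \<tau> @ N # N # takeWhile ?P (drop i \<tau>) else takeWhile ?P (take i \<tau>))"
    using assms(3) by (auto simp: insert_pair_def takeWhile_append)
  show ?thesis
  proof (cases "k \<in> set (take i \<tau>)")
    case True
    then have "length (takeWhile ?P (take i \<tau>)) < i"
      using length_takeWhile_less[OF True, of ?P] assms(1) by simp
    with True assms show ?thesis
      by (simp add: first_pos_eq_length_takeWhile set_insert_pair shift_def \<tau> \<sigma>)
  next
    case False
    with assms show ?thesis
      by (auto simp: first_pos_eq_length_takeWhile set_insert_pair shift_def \<tau> \<sigma>)
  qed
qed

lemma filter_insert_pair:
  assumes "N \<notin> set \<tau>"
  shows "filter (\<lambda>y. y \<noteq> N) (insert_pair \<tau> i N) = \<tau>"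
proof -
  have "filter (\<lambda>y. y \<noteq> N) (take i \<tau>) = take i \<tau>" "filter (\<lambda>y. y \<noteq> N) (drop i \<tau>) = drop i \<tau>"
    using assms by (auto simp: filter_id_conv dest: in_set_takeD in_set_dropD)
  then show ?thesis
    by (simp add: insert_pair_def)
qed

lemma bij_betw_insert_pair:
  "bij_betw (\<lambda>(\<tau>, i). insert_pair \<tau> i (Suc n)) (SIGMA \<tau>:stirling_perms n. {..length \<tau>}) (stirling_perms (Suc n))"
proof (rule bij_betw_imageI)
  have fresh: "Suc n \<notin> set \<tau>" if "\<tau> \<in> stirling_perms n" for \<tau>
    using set_stirling_perm[OF that] by simp
  show "inj_on (\<lambda>(\<tau>, i). insert_pair \<tau> i (Suc n)) (SIGMA \<tau>:stirling_perms n. {..length \<tau>})"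
  proof (rule inj_onI, clarsimp)
    fix \<tau> i \<tau>' i'
    assume "\<tau> \<in> stirling_perms n" "i \<le> length \<tau>" "\<tau>' \<in> stirling_perms n" "i' \<le> length \<tau>'"
      and eq: "insert_pair \<tau> i (Suc n) = insert_pair \<tau>' i' (Suc n)"
    then show "\<tau> = \<tau>' \<and> i = i'"
      using filter_insert_pair[OF fresh, of \<tau>] filter_insert_pair[OF fresh, of \<tau>']
        first_pos_insert_pair_new[OF fresh, of \<tau> i] first_pos_insert_pair_new[OF fresh, of \<tau>' i']
      by metis
  qed
  show "(\<lambda>(\<tau>, i). insert_pair \<tau> i (Suc n)) ` (SIGMA \<tau>:stirling_perms n. {..length \<tau>}) = stirling_perms (Suc n)"
    by (auto simp: insert_pair_in_stirling_perms elim!: stirling_perms_Suc_cases)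
qed

section \<open>The statistics under insertion\<close>

lemma even_idx_insert_pair:
  assumes "N \<notin> set \<tau>" "i \<le> length \<tau>"
  shows "even_idx (insert_pair \<tau> i N) = even_idx \<tau> + (if odd i then 1 else 0)"
proof -
  have "odd (first_pos (insert_pair \<tau> i N) k) \<longleftrightarrow> odd (first_pos \<tau> k)" if "k \<in> set \<tau>" for k
  proof -
    have "k \<noteq> N"
      using that assms(1) by blast
    then show ?thesis
      using that assms(2) by (simp add: first_pos_insert_pair_old shift_def)
  qed
  then have "{k \<in> set (insert_pair \<tau> i N). odd (first_pos (insert_pair \<tau> i N) k)}
      = {k \<in> set \<tau>. odd (first_pos \<tau> k)} \<union> (if odd i then {N} else {})"
    using assms by (auto simp: set_insert_pair first_pos_insert_pair_new)
  then show ?thesis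
    using assms(1) by (simp add: even_idx_def)
qed

definition plateaux :: "nat list \<Rightarrow> nat set" where
  "plateaux \<sigma> = {j. 1 \<le> j \<and> j + 1 < length \<sigma> \<and> \<sigma> ! (j - 1) < \<sigma> ! j \<and> \<sigma> ! j = \<sigma> ! (j + 1)}"

lemma ap_eq_card_plateaux: "ap \<sigma> = card (plateaux \<sigma>)"
  by (simp add: ap_def plateaux_def)

lemma finite_plateaux: "finite (plateaux \<sigma>)"
  by (rule finite_subset[of _ "{..<length \<sigma>}"]) (auto simp: plateaux_def)

lemma zero_notin_plateaux: "0 \<notin> plateaux \<sigma>"
  by (simp add: plateaux_def)

lemma Suc_notin_plateaux: "j \<in> plateaux \<sigma> \<Longrightarrow> Suc j \<notin> plateaux \<sigma>"
  by (auto simp: plateaux_def)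

lemma plateaux_insert_pair_boundary:
  assumes bound: "\<forall>y\<in>set \<tau>. y < N" and i: "i \<le> length \<tau>"
    and j: "j + 1 = i \<or> j = Suc i \<or> j = i + 2"
  shows "j \<notin> plateaux (insert_pair \<tau> i N)"
proof
  let ?\<sigma> = "insert_pair \<tau> i N"
  assume "j \<in> plateaux ?\<sigma>"
  then have j1: "j + 1 < length \<tau> + 2" "?\<sigma> ! (j - 1) < ?\<sigma> ! j" "?\<sigma> ! j = ?\<sigma> ! (j + 1)"
    using i by (simp_all add: plateaux_def)
  from j show False
  proof (elim disjE)
    assume "j + 1 = i"
    then have "?\<sigma> ! j < N" "?\<sigma> ! (j + 1) = N"
      using i bound by (simp_all add: nth_insert_pair_simps)
    with j1 show False
      by simp
  next
    assume "j = Suc i"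
    then have "?\<sigma> ! j = N" "?\<sigma> ! (j + 1) < N"
      using i j1(1) bound by (simp_all add: nth_insert_pair_simps)
    with j1 show False
      by simp
  next
    assume "j = i + 2"
    then have "?\<sigma> ! (j - 1) = N" "?\<sigma> ! j < N"
      using i j1(1) bound by (simp_all add: nth_insert_pair_simps)
    with j1 show False
      by simp
  qed
qed

lemma plateaux_insert_pair:
  assumes bound: "\<forall>y\<in>set \<tau>. y < N" and i: "i \<le> length \<tau>"
  shows "plateaux (insert_pair \<tau> i N) = shift i ` (plateaux \<tau> - {i - 1, i}) \<union> (if i = 0 then {} else {i})"
    (is "plateaux ?\<sigma> = ?R")
proof (intro set_eqI iffI)
  fix j
  assume j: "j \<in> plateaux ?\<sigma>"
  then have j1: "1 \<le> j" "j + 1 < length \<tau> + 2" "?\<sigma> ! (j - 1) < ?\<sigma> ! j" "?\<sigma> ! j = ?\<sigma> ! (j + 1)"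
    using i by (simp_all add: plateaux_def)
  consider "j + 1 < i" | "j = i" | "i + 3 \<le> j" | "j + 1 = i \<or> j = Suc i \<or> j = i + 2"
    by linarith
  then show "j \<in> ?R"
  proof cases
    case 1
    then have "j \<in> plateaux \<tau> - {i - 1, i}" "shift i j = j"
      using j1 i by (auto simp: plateaux_def nth_insert_pair_simps shift_def)
    then show ?thesis
      by (metis UnI1 image_eqI)
  next
    case 3
    then have "j - 2 - 1 = j - 1 - 2" "j - 2 + 1 = j + 1 - 2"
      by simp_all
    with 3 have "j - 2 \<in> plateaux \<tau> - {i - 1, i}" "shift i (j - 2) = j"
      using j1 i by (auto simp: plateaux_def nth_insert_pair_simps shift_def)
    then show ?thesis
      by (metis UnI1 image_eqI)
  next
    case 4
    with j plateaux_insert_pair_boundary[OF bound i] show ?thesis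
      by blast
  qed (use j1 in simp)
next
  fix j
  assume "j \<in> ?R"
  then consider j' where "j' \<in> plateaux \<tau>" "j' \<noteq> i - 1" "j' \<noteq> i" "j = shift i j'" | "i \<noteq> 0" "j = i"
    by (auto split: if_splits)
  then show "j \<in> plateaux ?\<sigma>"
  proof cases
    case 1
    then show ?thesis
      using i by (auto simp: plateaux_def nth_insert_pair_simps shift_def)
  next
    case 2
    then show ?thesis
      using i bound by (auto simp: plateaux_def nth_insert_pair_simps)
  qed
qed

lemma card_Diff_adjacent_pair:
  assumes fin: "finite J" and "0 \<notin> J" and no_adj: "\<forall>j\<in>J. Suc j \<notin> J"
  shows "card (J - {i - 1, i}) + (if i = 0 then 0 else 1) =
    (if i \<in> insert 0 (J \<union> Suc ` J) then card J else Suc (card J))"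
proof -
  consider "i = 0" | "i \<noteq> 0" "i \<in> J" | "i \<noteq> 0" "i - 1 \<in> J" | "i \<noteq> 0" "i \<notin> J" "i - 1 \<notin> J"
    by blast
  then show ?thesis
  proof cases
    case 1
    with \<open>0 \<notin> J\<close> show ?thesis
      by simp
  next
    case 2
    then have "i - 1 \<notin> J" "card J > 0"
      using no_adj fin by (auto simp: card_gt_0_iff)
    with 2 fin show ?thesis
      by (simp add: insert_commute)
  next
    case 3
    then have "i \<notin> J" "i \<in> Suc ` J" "card J > 0"
      using no_adj image_eqI[of i Suc "i - 1" J] fin by (auto simp: card_gt_0_iff)
    with 3 fin show ?thesis
      by simp
  next
    case 4
    then have "i \<notin> Suc ` J"
      by auto
    with 4 show ?thesis
      by simp
  qed
qed

lemma ap_insert_pair: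
  assumes "\<forall>y\<in>set \<tau>. y < N" "i \<le> length \<tau>"
  shows "ap (insert_pair \<tau> i N) =
    (if i \<in> insert 0 (plateaux \<tau> \<union> Suc ` plateaux \<tau>) then ap \<tau> else Suc (ap \<tau>))"
proof -
  let ?J = "plateaux \<tau>"
  have "i \<notin> shift i ` A" for A
    by (auto simp: shift_def)
  then have "ap (insert_pair \<tau> i N) = card (shift i ` (?J - {i - 1, i})) + (if i = 0 then 0 else 1)"
    using assms finite_plateaux[of \<tau>]
    by (auto simp: ap_eq_card_plateaux plateaux_insert_pair card_Un_disjoint)
  also have "\<dots> = card (?J - {i - 1, i}) + (if i = 0 then 0 else 1)"
    using strict_mono_shift[of i] by (simp add: card_image strict_mono_imp_inj_on)
  also have "\<dots> = (if i \<in> insert 0 (?J \<union> Suc ` ?J) then ap \<tau> else Suc (ap \<tau>))"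
    unfolding ap_eq_card_plateaux
    by (rule card_Diff_adjacent_pair) (auto simp: finite_plateaux zero_notin_plateaux Suc_notin_plateaux)
  finally show ?thesis .
qed

lemma sum_insert_pair:
  fixes x :: "'a::comm_ring_1"
  assumes "\<tau> \<in> stirling_perms n"
  shows "(\<Sum>i\<le>length \<tau>. x ^ ap (insert_pair \<tau> i (Suc n)) * (-1) ^ even_idx (insert_pair \<tau> i (Suc n)))
       = x ^ ap \<tau> * (-1) ^ even_idx \<tau>"
proof -
  let ?J = "plateaux \<tau>"
  let ?B = "insert 0 (?J \<union> Suc ` ?J)"
  have bound: "\<forall>y\<in>set \<tau>. y < Suc n" and fresh: "Suc n \<notin> set \<tau>"
    using set_stirling_perm[OF assms] by auto
  have "x ^ ap (insert_pair \<tau> i (Suc n)) * (-1) ^ even_idx (insert_pair \<tau> i (Suc n))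
      = x ^ ap \<tau> * (-1) ^ even_idx \<tau> * ((if i \<in> ?B then 1 else x) * (-1) ^ i)" if "i \<le> length \<tau>" for i
    using that by (simp add: ap_insert_pair[OF bound] even_idx_insert_pair[OF fresh] power_add)
  then have "(\<Sum>i\<le>length \<tau>. x ^ ap (insert_pair \<tau> i (Suc n)) * (-1) ^ even_idx (insert_pair \<tau> i (Suc n)))
      = x ^ ap \<tau> * (-1) ^ even_idx \<tau> * (\<Sum>i\<le>length \<tau>. (if i \<in> ?B then 1 else x) * (-1) ^ i)"
    by (simp add: sum_distrib_left)
  also have "(\<Sum>i\<le>length \<tau>. (if i \<in> ?B then 1 else x) * (-1) ^ i) = 1"
  proof (rule sum_atMost_alternating_weights)
    show "even (length \<tau>)"
      using length_stirling_perm[OF assms] by simp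
    show "?B \<subseteq> {..length \<tau>}"
      by (auto simp: plateaux_def)
    show "(\<Sum>i\<in>?B. (-1::'a) ^ i) = 1"
      by (rule sum_neg_one_power_insert_0_Suc_image)
        (auto simp: finite_plateaux zero_notin_plateaux dest: Suc_notin_plateaux)
  qed
  finally show ?thesis
    by simp
qed

lemma sum_stirling_perms:
  "(\<Sum>\<sigma>\<in>stirling_perms n. x ^ ap \<sigma> * (-1) ^ even_idx \<sigma>) = (1::'a::comm_ring_1)"
proof (induction n)
  case 0
  then show ?case
    by (simp add: stirling_perms_0 ap_def even_idx_def)
next
  case (Suc n)
  let ?w = "\<lambda>\<sigma>. x ^ ap \<sigma> * (-1) ^ even_idx \<sigma>"
  have "(\<Sum>\<sigma>\<in>stirling_perms (Suc n). ?w \<sigma>)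
      = (\<Sum>(\<tau>, i)\<in>(SIGMA \<tau>:stirling_perms n. {..length \<tau>}). ?w (insert_pair \<tau> i (Suc n)))"
    using sum.reindex_bij_betw[OF bij_betw_insert_pair, of ?w n] by (simp add: case_prod_beta')
  also have "\<dots> = (\<Sum>\<tau>\<in>stirling_perms n. \<Sum>i\<le>length \<tau>. ?w (insert_pair \<tau> i (Suc n)))"
    by (rule sum.Sigma[symmetric]) (simp_all add: finite_stirling_perms)
  also have "\<dots> = (\<Sum>\<tau>\<in>stirling_perms n. ?w \<tau>)"
    by (rule sum.cong) (simp_all add: sum_insert_pair)
  finally show ?case
    using Suc.IH by simp
qed

theorem theorem2:
  fixes n :: nat and x :: "'a :: comm_ring_1"
  assumes "n \<ge> 1"
  shows "(\<Sum>\<sigma>\<in>stirling_perms n. x ^ ap \<sigma> * (-1) ^ even_idx \<sigma>)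
           = (\<Sum>(\<pi>, M)\<in>marked_perms n. x ^ asc \<pi> * (-1) ^ card M)
       \<and> (\<Sum>(\<pi>, M)\<in>marked_perms n. x ^ asc \<pi> * (-1) ^ card M) = 1"
  by (simp add: sum_stirling_perms sum_marked_perms)

end
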